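(* Let $S$ be a numerical semigroup. Then the set of minimal elements of $(\mathrm{Betti}(S),\le_S)$ equals the set of minimal elements of $(\mathcal E(S),\le_S)$. Moreover, for every minimal element $\alpha$ of $(\mathcal E(S),\le_S)$ one has $e_\alpha=\mathfrak d(\alpha)-1=\mathrm i(\alpha)-1$.
   Context: A numerical semigroup $S$ is a submonoid of $(\mathbb N,+)$ with finite complement, with minimal generating set $A=\{n_1,\dots,n_e\}$. The cyclotomic exponent sequence is the unique integer sequence $(e_j)_{j\ge1}$ with $(1-x)\sum_{s\in S}x^s=\prod_{j\ge1}(1-x^j)^{e_j}$ in $\mathbb Z[[x]]$; $\mathcal E(S)=\{d\in\mathbb N: d\ge2,\ e_d\ne0,\ d\notin A\}$. Write $a\le_S b$ if $b-a\in S$. Let $\varphi:\mathbb N^e\to S$, $\varphi(a)=\sum_ia_in_i$; $\mathrm Z(s)=\varphi^{-1}(s)$ and $\mathfrak d(s)=|\mathrm Z(s)|$. $\nabla_s$ is the graph on $\mathrm Z(s)$ with distinct $x,y$ adjacent iff $x\cdot y\ne0$; $s$ is a Betti element if $\nabla_s$ is disconnected, $\mathrm{Betti}(S)$ is the set of Betti elements. A factorization $z\in\mathrm Z(s)$ is isolated if $z\cdot x=0$ for all $x\in\mathrm Z(s)\setminus\{z\}$; $\mathrm i(s)$ is the number of isolated factorizations of $s$. *)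

theory Defs
  imports "HOL-Computational_Algebra.Formal_Power_Series"
begin

definition numerical_semigroup :: "nat set \<Rightarrow> bool" where
  "numerical_semigroup S \<longleftrightarrow> 0 \<in> S \<and> (\<forall>a\<in>S. \<forall>b\<in>S. a + b \<in> S) \<and> finite (UNIV - S)"

inductive_set monoid_closure :: "nat set \<Rightarrow> nat set" for A where
  mc_zero: "0 \<in> monoid_closure A"
| mc_gen: "a \<in> A \<Longrightarrow> a \<in> monoid_closure A"
| mc_add: "x \<in> monoid_closure A \<Longrightarrow> y \<in> monoid_closure A \<Longrightarrow> x + y \<in> monoid_closure A"

text \<open>The minimal generating set (unique for numerical semigroups).\<close>
definition min_gens :: "nat set \<Rightarrow> nat set" where
  "min_gens S = (THE A. monoid_closure A = S \<and> (\<forall>B. B \<subset> A \<longrightarrow> monoid_closure B \<noteq> S))"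

definition le_S :: "nat set \<Rightarrow> nat \<Rightarrow> nat \<Rightarrow> bool" where
  "le_S S a b \<longleftrightarrow> a \<le> b \<and> b - a \<in> S"

definition minimal_elements :: "nat set \<Rightarrow> nat set \<Rightarrow> nat set" where
  "minimal_elements S X = {x \<in> X. \<forall>y\<in>X. le_S S y x \<longrightarrow> y = x}"

text \<open>Hilbert series of S times (1 - x), over the rationals (coefficients are integers).\<close>
definition sg_series :: "nat set \<Rightarrow> rat fps" where
  "sg_series S = (1 - fps_X) * Abs_fps (\<lambda>n. if n \<in> S then 1 else 0)"

definition cyc_factor :: "int \<Rightarrow> nat \<Rightarrow> rat fps" where
  "cyc_factor k j = (if k \<ge> 0 then (1 - fps_X ^ j) ^ nat k
                     else inverse ((1 - fps_X ^ j) ^ nat (- k)))"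

text \<open>Coefficientwise meaning of the infinite product: the n-th coefficient of
  \<Prod>_{j\<ge>1} (1-x^j)^{e_j} is that of the finite product over 1 \<le> j \<le> n.\<close>
definition is_cyc_exp :: "nat set \<Rightarrow> (nat \<Rightarrow> int) \<Rightarrow> bool" where
  "is_cyc_exp S e \<longleftrightarrow> e 0 = 0 \<and>
     (\<forall>n. fps_nth (sg_series S) n = fps_nth (\<Prod>j\<in>{1..n}. cyc_factor (e j) j) n)"

definition cyc_exp :: "nat set \<Rightarrow> nat \<Rightarrow> int" where
  "cyc_exp S = (THE e. is_cyc_exp S e)"

definition cyc_E :: "nat set \<Rightarrow> nat set" where
  "cyc_E S = {d. d \<ge> 2 \<and> cyc_exp S d \<noteq> 0 \<and> d \<notin> min_gens S}"

definition factorizations :: "nat set \<Rightarrow> nat \<Rightarrow> (nat \<Rightarrow> nat) set" where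
  "factorizations S s = {z. (\<forall>a. a \<notin> min_gens S \<longrightarrow> z a = 0)
                          \<and> (\<Sum>a\<in>min_gens S. z a * a) = s}"

definition fdot :: "nat set \<Rightarrow> (nat \<Rightarrow> nat) \<Rightarrow> (nat \<Rightarrow> nat) \<Rightarrow> nat" where
  "fdot S x y = (\<Sum>a\<in>min_gens S. x a * y a)"

definition nabla_edges :: "nat set \<Rightarrow> nat \<Rightarrow> ((nat \<Rightarrow> nat) \<times> (nat \<Rightarrow> nat)) set" where
  "nabla_edges S s = {(x, y). x \<in> factorizations S s \<and> y \<in> factorizations S s
                        \<and> x \<noteq> y \<and> fdot S x y \<noteq> 0}"

definition nabla_connected :: "nat set \<Rightarrow> nat \<Rightarrow> bool" where
  "nabla_connected S s \<longleftrightarrow> (\<forall>x\<in>factorizations S s. \<forall>y\<in>factorizations S s.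
                              (x, y) \<in> (nabla_edges S s)\<^sup>*)"

definition Betti :: "nat set \<Rightarrow> nat set" where
  "Betti S = {s \<in> S. \<not> nabla_connected S s}"

definition num_fact :: "nat set \<Rightarrow> nat \<Rightarrow> nat" where
  "num_fact S s = card (factorizations S s)"

definition isolated_facts :: "nat set \<Rightarrow> nat \<Rightarrow> (nat \<Rightarrow> nat) set" where
  "isolated_facts S s = {z \<in> factorizations S s.
      \<forall>x \<in> factorizations S s - {z}. fdot S z x = 0}"

definition num_isolated :: "nat set \<Rightarrow> nat \<Rightarrow> nat" where
  "num_isolated S s = card (isolated_facts S s)"

end

theory Submission
  imports Defs
begin

(* Let D be the set of elements of S with at least two factorizations; D + S \<subseteq> D.
   Every Betti element lies in D, and two distinct factorizations of a minimal element m of D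
   never share an atom a (they would give two factorizations of m - a), so m is a Betti element
   all of whose factorizations are isolated. Hence min Betti(S) = min D.

   Put K = H \<cdot> \<Prod>\<^sub>a\<^sub>\<in>\<^sub>A (1 - x\<^sup>a) for the Hilbert series H of S, so that H = K \<cdot> \<Sum>\<^sub>s d(s) x\<^sup>s.
   Comparing coefficients, K vanishes in positive degrees outside D and K\<^sub>m = 1 - d(m) for m
   minimal in D. For a series supported on the additive semigroup D \<union> {0}, the cyclotomic
   exponents vanish outside D (degree by degree), and at an element of D that is not a sum of
   two elements of D the exponent is minus the coefficient. The exponents of K differ from
   those of S only at 1 and at the atoms, which gives E(S) \<subseteq> D and e\<^sub>m = d(m) - 1 for every
   minimal m of D, so min E(S) = min D as well. *)

unbundle fps_syntax

section \<open>Atoms of a numerical semigroup\<close>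

definition atoms :: "nat set \<Rightarrow> nat set" where
  "atoms S = {a \<in> S. a \<noteq> 0 \<and> (\<forall>x\<in>S. \<forall>y\<in>S. a = x + y \<longrightarrow> x = 0 \<or> y = 0)}"

lemma atoms_subset: "atoms S \<subseteq> S"
  by (auto simp: atoms_def)

lemma zero_notin_atoms: "0 \<notin> atoms S"
  by (simp add: atoms_def)

lemma atomD: "a \<in> atoms S \<Longrightarrow> x \<in> S \<Longrightarrow> y \<in> S \<Longrightarrow> a = x + y \<Longrightarrow> x = 0 \<or> y = 0"
  unfolding atoms_def by blast

lemma monoid_closure_least:
  assumes "0 \<in> T" "\<And>x y. x \<in> T \<Longrightarrow> y \<in> T \<Longrightarrow> x + y \<in> T" "B \<subseteq> T"
  shows "monoid_closure B \<subseteq> T"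
proof
  fix x assume "x \<in> monoid_closure B"
  then show "x \<in> T"
    by (induction rule: monoid_closure.induct) (use assms in auto)
qed

lemma atom_in_generators:
  assumes "a \<in> atoms S" "a \<in> monoid_closure B" "monoid_closure B \<subseteq> S"
  shows "a \<in> B"
  using assms(2,1)
proof (induction rule: monoid_closure.induct)
  case mc_zero
  then show ?case by (simp add: zero_notin_atoms)
next
  case (mc_gen a)
  then show ?case by simp
next
  case (mc_add x y)
  then have "x \<in> S" "y \<in> S"
    using assms(3) by auto
  then have "x = 0 \<or> y = 0"
    using atomD[OF mc_add.prems] by blast
  then show ?case using mc_add by auto
qed

locale num_semigroup =
  fixes S :: "nat set"
  assumes S: "numerical_semigroup S"
begin

lemma numerical_semigroup_zero: "0 \<in> S"
  using S by (simp add: numerical_semigroup_def)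

lemma numerical_semigroup_add: "a \<in> S \<Longrightarrow> b \<in> S \<Longrightarrow> a + b \<in> S"
  using S by (simp add: numerical_semigroup_def)

lemma monoid_closure_atoms: "monoid_closure (atoms S) = S"
proof
  show "monoid_closure (atoms S) \<subseteq> S"
    by (rule monoid_closure_least)
      (auto simp: numerical_semigroup_zero numerical_semigroup_add atoms_subset)
  show "S \<subseteq> monoid_closure (atoms S)"
  proof
    fix s assume "s \<in> S"
    then show "s \<in> monoid_closure (atoms S)"
    proof (induction s rule: less_induct)
      case (less s)
      show ?case
      proof (cases "s = 0 \<or> s \<in> atoms S")
        case True
        then show ?thesis by (auto intro: monoid_closure.intros)
      next
        case False
        then obtain x y where "x \<in> S" "y \<in> S" "s = x + y" "x \<noteq> 0" "y \<noteq> 0"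
          using less.prems unfolding atoms_def by blast
        then show ?thesis
          using less.IH[of x] less.IH[of y] by (auto intro: monoid_closure.mc_add)
      qed
    qed
  qed
qed

lemma min_gens_eq_atoms: "min_gens S = atoms S"
  unfolding min_gens_def
proof (rule the_equality)
  show "monoid_closure (atoms S) = S \<and> (\<forall>B. B \<subset> atoms S \<longrightarrow> monoid_closure B \<noteq> S)"
  proof (intro conjI allI impI notI)
    fix B assume B: "B \<subset> atoms S" and "monoid_closure B = S"
    then have "atoms S \<subseteq> B"
      using atom_in_generators[of _ S B] atoms_subset by blast
    with B show False by blast
  qed (rule monoid_closure_atoms)
next
  fix A assume A: "monoid_closure A = S \<and> (\<forall>B. B \<subset> A \<longrightarrow> monoid_closure B \<noteq> S)"
  then have "atoms S \<subseteq> A"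
    using atom_in_generators[of _ S A] atoms_subset by blast
  moreover have "\<not> atoms S \<subset> A"
    using A monoid_closure_atoms by blast
  ultimately show "A = atoms S" by blast
qed

lemma finite_atoms: "finite (atoms S)"
proof -
  have "finite (UNIV - S)"
    using S by (simp add: numerical_semigroup_def)
  then have "infinite S"
    using finite_Un[of S "UNIV - S"] by auto
  then obtain m where m: "m \<in> S" "m \<noteq> 0"
    using infinite_imp_nonempty[of "S - {0}"] by auto
  have "atoms S \<subseteq> {..m} \<union> (\<lambda>x. x + m) ` (UNIV - S)"
  proof
    fix a assume a: "a \<in> atoms S"
    show "a \<in> {..m} \<union> (\<lambda>x. x + m) ` (UNIV - S)"
    proof (cases "a \<le> m")
      case False
      then have "a - m \<notin> S"
        using atomD[OF a m(1), of "a - m"] m(2) by auto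
      then show ?thesis
        using False by (auto intro!: image_eqI[of _ _ "a - m"])
    qed simp
  qed
  moreover have "finite ({..m} \<union> (\<lambda>x. x + m) ` (UNIV - S))"
    using \<open>finite (UNIV - S)\<close> by simp
  ultimately show ?thesis
    by (rule finite_subset)
qed

end


section \<open>Factorizations over a finite set of generators\<close>

definition factorizations_over :: "nat set \<Rightarrow> nat \<Rightarrow> (nat \<Rightarrow> nat) set" where
  "factorizations_over B s = {z. (\<forall>a. a \<notin> B \<longrightarrow> z a = 0) \<and> (\<Sum>a\<in>B. z a * a) = s}"

lemma factorizations_eq_over_min_gens: "factorizations S s = factorizations_over (min_gens S) s"
  by (simp add: factorizations_def factorizations_over_def)

lemma factorizations_overD:
  "z \<in> factorizations_over B s \<Longrightarrow> a \<notin> B \<Longrightarrow> z a = 0"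
  "z \<in> factorizations_over B s \<Longrightarrow> (\<Sum>a\<in>B. z a * a) = s"
  by (auto simp: factorizations_over_def)

lemma factorization_le:
  assumes "finite B" "z \<in> factorizations_over B s" "a \<in> B"
  shows "z a * a \<le> s"
  using assms member_le_sum[of a B "\<lambda>b. z b * b"] by (auto simp: factorizations_over_def)

lemma finite_factorizations_over:
  assumes "finite B" "0 \<notin> B"
  shows "finite (factorizations_over B s)"
proof -
  let ?extend = "\<lambda>g a. if a \<in> B then g a else 0"
  have "factorizations_over B s \<subseteq> ?extend ` (PiE B (\<lambda>_. {..s}))"
  proof
    fix z assume z: "z \<in> factorizations_over B s"
    have "z a \<le> s" if "a \<in> B" for a
    proof -
      have "a \<noteq> 0"
        using that assms(2) by metis
      then have "z a \<le> z a * a"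
        by simp
      then show ?thesis
        using factorization_le[OF assms(1) z that] by linarith
    qed
    then have "restrict z B \<in> PiE B (\<lambda>_. {..s})"
      by auto
    moreover have "z = ?extend (restrict z B)"
      using z by (auto simp: factorizations_over_def)
    ultimately show "z \<in> ?extend ` (PiE B (\<lambda>_. {..s}))"
      by blast
  qed
  then show ?thesis
    using assms(1) by (auto intro: finite_subset simp: finite_PiE)
qed

lemma factorizations_over_zero:
  assumes "finite B" "0 \<notin> B"
  shows "factorizations_over B 0 = {\<lambda>_. 0}"
proof -
  have "z a = 0" if "z \<in> factorizations_over B 0" for z a
    using factorization_le[OF assms(1) that, of a] factorizations_overD(1)[OF that, of a] assms(2)
    by (cases "a \<in> B") auto
  then show ?thesis
    by (auto simp: factorizations_over_def)
qed

lemma factorization_add: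
  "x \<in> factorizations_over B s \<Longrightarrow> y \<in> factorizations_over B t
    \<Longrightarrow> (\<lambda>a. x a + y a) \<in> factorizations_over B (s + t)"
  by (auto simp: factorizations_over_def sum.distrib algebra_simps)

lemma factorization_single:
  assumes "finite B" "a \<in> B"
  shows "(\<lambda>b. of_bool (b = a)) \<in> factorizations_over B a"
  using assms by (auto simp: factorizations_over_def if_distrib cong: if_cong)

lemma factorization_remove:
  assumes "finite B" "x \<in> factorizations_over B s" "a \<in> B" "0 < x a"
  shows "x(a := x a - 1) \<in> factorizations_over B (s - a)" and "a \<le> s"
proof -
  have s: "s = x a * a + (\<Sum>b\<in>B - {a}. x b * b)"
    using assms by (simp add: factorizations_over_def sum.remove)
  have "(\<Sum>b\<in>B. (x(a := x a - 1)) b * b) = (x a - 1) * a + (\<Sum>b\<in>B - {a}. x b * b)"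
    using assms by (simp add: sum.remove)
  moreover have "x a * a = (x a - 1) * a + a"
    using assms(4) by (cases "x a") auto
  ultimately show "x(a := x a - 1) \<in> factorizations_over B (s - a)" "a \<le> s"
    using s assms(2,3) by (auto simp: factorizations_over_def)
qed

lemma card_factorizations_over_using:
  assumes "finite B" "a \<in> B"
  shows "card {z \<in> factorizations_over B s. z a \<noteq> 0}
         = (if a \<le> s then card (factorizations_over B (s - a)) else 0)"
proof (cases "a \<le> s")
  case True
  let ?F = "factorizations_over B"
  have "bij_betw (\<lambda>z. z(a := z a - 1)) {z \<in> ?F s. z a \<noteq> 0} (?F (s - a))"
  proof (rule bij_betw_byWitness[where f' = "\<lambda>w. w(a := w a + 1)"])
    show "(\<lambda>z. z(a := z a - 1)) ` {z \<in> ?F s. z a \<noteq> 0} \<subseteq> ?F (s - a)"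
    proof (rule image_subsetI)
      fix z assume "z \<in> {z \<in> ?F s. z a \<noteq> 0}"
      then show "z(a := z a - 1) \<in> ?F (s - a)"
        by (intro factorization_remove(1)[OF assms(1) _ assms(2)]) auto
    qed
    show "(\<lambda>w. w(a := w a + 1)) ` ?F (s - a) \<subseteq> {z \<in> ?F s. z a \<noteq> 0}"
    proof (rule image_subsetI)
      fix w assume w: "w \<in> ?F (s - a)"
      have "w(a := w a + 1) = (\<lambda>b. w b + of_bool (b = a))"
        by auto
      then have "w(a := w a + 1) \<in> ?F (s - a + a)"
        using factorization_add[OF w factorization_single[OF assms]] by simp
      then show "w(a := w a + 1) \<in> {z \<in> ?F s. z a \<noteq> 0}"
        using True by simp
    qed
  qed auto
  then show ?thesis
    using True by (simp add: bij_betw_same_card)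
next
  case False
  have "{z \<in> factorizations_over B s. z a \<noteq> 0} = {}"
  proof (rule equals0I)
    fix z assume z: "z \<in> {z \<in> factorizations_over B s. z a \<noteq> 0}"
    then have "a \<le> z a * a"
      by simp
    also have "\<dots> \<le> s"
      using z factorization_le[OF assms(1) _ assms(2)] by simp
    finally show False
      using False by simp
  qed
  then show ?thesis
    using False by (simp only: card.empty if_False)
qed

lemma card_factorizations_over_insert:
  assumes "finite B" "0 \<notin> B" "a \<noteq> 0" "a \<notin> B"
  shows "card (factorizations_over (insert a B) s) =
           card (factorizations_over B s)
         + (if a \<le> s then card (factorizations_over (insert a B) (s - a)) else 0)"
proof -
  let ?F = "factorizations_over (insert a B)"
  have "finite (?F s)"
    using assms by (intro finite_factorizations_over) auto
  have sum_insert: "(\<Sum>b\<in>insert a B. z b * b) = z a * a + (\<Sum>b\<in>B. z b * b)" for z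
    using assms(1,4) by simp
  have without_a: "{z \<in> ?F s. z a = 0} = factorizations_over B s"
    using assms(4) by (auto simp: factorizations_over_def sum_insert; metis)
  have "card (?F s) = card ({z \<in> ?F s. z a = 0} \<union> {z \<in> ?F s. z a \<noteq> 0})"
    by (rule arg_cong[where f = card]) blast
  also have "\<dots> = card {z \<in> ?F s. z a = 0} + card {z \<in> ?F s. z a \<noteq> 0}"
    using \<open>finite (?F s)\<close> by (intro card_Un_disjoint) auto
  finally show ?thesis
    unfolding without_a card_factorizations_over_using[OF finite_insert[THEN iffD2, OF assms(1)] insertI1] .
qed

definition denumerant_fps :: "nat set \<Rightarrow> rat fps" where
  "denumerant_fps B = Abs_fps (\<lambda>s. of_nat (card (factorizations_over B s)))"

lemma denumerant_fps_insert:
  assumes "finite B" "0 \<notin> B" "a \<noteq> 0" "a \<notin> B"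
  shows "denumerant_fps (insert a B) * (1 - fps_X ^ a) = denumerant_fps B"
proof (rule fps_ext)
  fix s
  have "(denumerant_fps (insert a B) * (1 - fps_X ^ a)) $ s
        = denumerant_fps (insert a B) $ s - (denumerant_fps (insert a B) * fps_X ^ a) $ s"
    by (simp add: algebra_simps)
  also have "\<dots> = denumerant_fps B $ s"
    using card_factorizations_over_insert[OF assms, of s]
    by (auto simp: denumerant_fps_def fps_X_power_mult_right_nth)
  finally show "(denumerant_fps (insert a B) * (1 - fps_X ^ a)) $ s = denumerant_fps B $ s" .
qed

lemma denumerant_fps_times_prod:
  "finite B \<Longrightarrow> 0 \<notin> B \<Longrightarrow> denumerant_fps B * (\<Prod>a\<in>B. 1 - fps_X ^ a) = 1"
proof (induction B rule: finite_induct)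
  case empty
  have "factorizations_over {} s = (if s = 0 then {\<lambda>_. 0} else {})" for s
    by (auto simp: factorizations_over_def)
  then show ?case
    by (intro fps_ext) (simp add: denumerant_fps_def)
next
  case (insert a B)
  then have "denumerant_fps (insert a B) * (\<Prod>b\<in>insert a B. 1 - fps_X ^ b)
             = (denumerant_fps (insert a B) * (1 - fps_X ^ a)) * (\<Prod>b\<in>B. 1 - fps_X ^ b)"
    by (simp add: mult.assoc)
  also have "\<dots> = 1"
    using insert by (simp add: denumerant_fps_insert)
  finally show ?case .
qed


section \<open>Finite cyclotomic products\<close>

abbreviation cyc_prod :: "(nat \<Rightarrow> int) \<Rightarrow> nat \<Rightarrow> rat fps" where
  "cyc_prod e n \<equiv> \<Prod>j\<in>{1..n}. cyc_factor (e j) j"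

definition has_cyc_exps :: "rat fps \<Rightarrow> (nat \<Rightarrow> int) \<Rightarrow> bool" where
  "has_cyc_exps g e \<longleftrightarrow> (\<forall>n. g $ n = cyc_prod e n $ n)"

lemma is_cyc_exp_iff: "is_cyc_exp S e \<longleftrightarrow> e 0 = 0 \<and> has_cyc_exps (sg_series S) e"
  by (simp add: is_cyc_exp_def has_cyc_exps_def)

definition geometric_fps :: "nat \<Rightarrow> rat fps" where
  "geometric_fps j = Abs_fps (\<lambda>n. of_bool (j dvd n))"

lemma geometric_fps_times: "1 \<le> j \<Longrightarrow> geometric_fps j * (1 - fps_X ^ j) = 1"
proof (rule fps_ext)
  fix n assume j: "1 \<le> j"
  have "(geometric_fps j * (1 - fps_X ^ j)) $ n
        = geometric_fps j $ n - (geometric_fps j * fps_X ^ j) $ n"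
    by (simp add: algebra_simps)
  also have "\<dots> = (1 :: rat fps) $ n"
  proof (cases "n < j")
    case True
    then show ?thesis
      using j by (cases "n = 0")
        (auto simp: geometric_fps_def fps_X_power_mult_right_nth dest: dvd_imp_le)
  next
    case False
    then have "j dvd (n - j) \<longleftrightarrow> j dvd n"
      by (simp add: dvd_diff_nat dvd_minus_self)
    then show ?thesis
      using False j by (auto simp: geometric_fps_def fps_X_power_mult_right_nth)
  qed
  finally show "(geometric_fps j * (1 - fps_X ^ j)) $ n = (1 :: rat fps) $ n" .
qed

lemma inverse_one_minus_X_power:
  assumes "1 \<le> j"
  shows "inverse (1 - fps_X ^ j :: rat fps) = geometric_fps j"
proof -
  have "(1 - fps_X ^ j :: rat fps) $ 0 \<noteq> 0"
    using assms by simp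
  then have "geometric_fps j = (geometric_fps j * (1 - fps_X ^ j)) * inverse (1 - fps_X ^ j)"
    by (simp add: mult.assoc inverse_mult_eq_1')
  then show ?thesis
    using geometric_fps_times[OF assms] by simp
qed

lemma cyc_factor_eq:
  "1 \<le> j \<Longrightarrow> cyc_factor k j
     = (if 0 \<le> k then (1 - fps_X ^ j) ^ nat k else geometric_fps j ^ nat (- k))"
  by (simp add: cyc_factor_def fps_inverse_power inverse_one_minus_X_power)

lemma cyc_factor_zero [simp]: "cyc_factor 0 j = 1"
  by (simp add: cyc_factor_def)

lemma cyc_factor_times_one_minus_X_power:
  assumes "1 \<le> j"
  shows "cyc_factor k j * (1 - fps_X ^ j) = cyc_factor (k + 1) j"
proof (cases "0 \<le> k")
  case True
  then have "nat (k + 1) = Suc (nat k)"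
    by simp
  then show ?thesis
    using True assms by (simp add: cyc_factor_eq mult.commute)
next
  case False
  then have "nat (- k) = Suc (nat (- (k + 1)))"
    by simp
  then have "cyc_factor k j * (1 - fps_X ^ j)
             = geometric_fps j ^ nat (- (k + 1)) * (geometric_fps j * (1 - fps_X ^ j))"
    using False assms by (simp add: cyc_factor_eq mult_ac)
  then show ?thesis
    using False assms geometric_fps_times[OF assms] by (simp add: cyc_factor_eq)
qed

lemma cyc_factor_times_geometric_fps:
  assumes "1 \<le> j"
  shows "cyc_factor k j * geometric_fps j = cyc_factor (k - 1) j"
proof -
  have "cyc_factor k j * geometric_fps j
        = cyc_factor (k - 1) j * ((1 - fps_X ^ j) * geometric_fps j)"
    using cyc_factor_times_one_minus_X_power[OF assms, of "k - 1"] by (simp add: mult_ac)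
  then show ?thesis
    using geometric_fps_times[OF assms] by (simp add: mult.commute)
qed

definition low_terms :: "nat \<Rightarrow> int \<Rightarrow> rat fps \<Rightarrow> bool" where
  "low_terms j k F \<longleftrightarrow> F $ 0 = 1 \<and> (\<forall>i. 0 < i \<and> i < j \<longrightarrow> F $ i = 0) \<and> F $ j = - of_int k"

lemma fps_mult_nth_below_low_terms:
  assumes "low_terms j k G" "m < j"
  shows "(F * G) $ m = F $ m"
proof -
  have "(F * G) $ m = (\<Sum>t=0..m. F $ t * G $ (m - t))"
    by (simp add: fps_mult_nth)
  also have "\<dots> = (\<Sum>t=0..m. if t = m then F $ m else 0)"
    using assms by (intro sum.cong) (auto simp: low_terms_def)
  finally show ?thesis
    by simp
qed

lemma fps_mult_nth_at_low_terms:
  assumes "low_terms j k G" "1 \<le> j"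
  shows "(F * G) $ j = F $ j - of_int k * F $ 0"
proof -
  have "{0..j} = insert 0 (insert j {1..<j})"
    using assms(2) by auto
  then have "(F * G) $ j = F $ 0 * G $ j + F $ j * G $ 0 + (\<Sum>t\<in>{1..<j}. F $ t * G $ (j - t))"
    using assms(2) by (simp add: fps_mult_nth)
  also have "(\<Sum>t\<in>{1..<j}. F $ t * G $ (j - t)) = 0"
    using assms by (intro sum.neutral) (auto simp: low_terms_def)
  finally show ?thesis
    using assms by (simp add: low_terms_def)
qed

lemma low_terms_mult:
  assumes "low_terms j k F" "low_terms j l G" "1 \<le> j"
  shows "low_terms j (k + l) (F * G)"
proof -
  have "(F * G) $ i = 0" if "0 < i" "i < j" for i
    using fps_mult_nth_below_low_terms[OF assms(2) that(2), of F] assms(1) that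
    by (simp add: low_terms_def)
  moreover have "(F * G) $ j = - of_int (k + l)"
    using fps_mult_nth_at_low_terms[OF assms(2,3), of F] assms(1) by (simp add: low_terms_def)
  ultimately show ?thesis
    using assms by (simp add: low_terms_def)
qed

lemma low_terms_power: "1 \<le> j \<Longrightarrow> low_terms j k F \<Longrightarrow> low_terms j (int m * k) (F ^ m)"
proof (induction m)
  case 0
  then show ?case by (simp add: low_terms_def)
next
  case (Suc m)
  then have "low_terms j (int m * k + k) (F ^ m * F)"
    by (intro low_terms_mult)
  then show ?case
    by (simp add: algebra_simps)
qed

lemma low_terms_one_minus_X_power: "1 \<le> j \<Longrightarrow> low_terms j 1 (1 - fps_X ^ j)"
  by (auto simp: low_terms_def)

lemma low_terms_geometric_fps: "1 \<le> j \<Longrightarrow> low_terms j (-1) (geometric_fps j)"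
  by (auto simp: low_terms_def geometric_fps_def dest: dvd_imp_le)

lemma low_terms_cyc_factor:
  assumes "1 \<le> j"
  shows "low_terms j k (cyc_factor k j)"
proof (cases "0 \<le> k")
  case True
  then show ?thesis
    using low_terms_power[OF assms low_terms_one_minus_X_power[OF assms], of "nat k"] assms
    by (simp add: cyc_factor_eq)
next
  case False
  then show ?thesis
    using low_terms_power[OF assms low_terms_geometric_fps[OF assms], of "nat (- k)"] assms
    by (simp add: cyc_factor_eq)
qed

lemma cyc_prod_Suc: "cyc_prod e (Suc n) = cyc_prod e n * cyc_factor (e (Suc n)) (Suc n)"
  by (simp add: prod.cl_ivl_Suc)

lemma cyc_prod_nth_0 [simp]: "cyc_prod e n $ 0 = 1"
proof (induction n)
  case (Suc n)
  have "low_terms (Suc n) (e (Suc n)) (cyc_factor (e (Suc n)) (Suc n))"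
    by (rule low_terms_cyc_factor) simp
  then show ?case
    using Suc by (simp add: cyc_prod_Suc low_terms_def)
qed simp

lemma cyc_prod_Suc_nth_below: "m \<le> n \<Longrightarrow> cyc_prod e (Suc n) $ m = cyc_prod e n $ m"
  unfolding cyc_prod_Suc by (rule fps_mult_nth_below_low_terms[OF low_terms_cyc_factor]) auto

lemma cyc_prod_Suc_nth_top:
  "cyc_prod e (Suc n) $ Suc n = cyc_prod e n $ Suc n - of_int (e (Suc n))"
proof -
  have "low_terms (Suc n) (e (Suc n)) (cyc_factor (e (Suc n)) (Suc n))"
    by (rule low_terms_cyc_factor) simp
  then show ?thesis
    unfolding cyc_prod_Suc using fps_mult_nth_at_low_terms cyc_prod_nth_0[of e n] by simp
qed

lemma cyc_prod_nth_stable: "m \<le> n \<Longrightarrow> cyc_prod e n $ m = cyc_prod e m $ m"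
proof (induction n)
  case (Suc n)
  show ?case
  proof (cases "m = Suc n")
    case False
    then have "m \<le> n"
      using Suc.prems by simp
    then show ?thesis
      using Suc.IH cyc_prod_Suc_nth_below by simp
  qed simp
qed simp

lemma cyc_prod_cong: "(\<And>j. 1 \<le> j \<Longrightarrow> j \<le> n \<Longrightarrow> e j = e' j) \<Longrightarrow> cyc_prod e n = cyc_prod e' n"
  by (rule prod.cong) auto

lemma has_cyc_exps_nth: "has_cyc_exps g e \<Longrightarrow> m \<le> n \<Longrightarrow> g $ m = cyc_prod e n $ m"
  unfolding has_cyc_exps_def by (metis cyc_prod_nth_stable)


definition int_fps :: "rat fps \<Rightarrow> bool" where
  "int_fps F \<longleftrightarrow> (\<forall>n. F $ n \<in> \<int>)"

lemma int_fps_mult: "int_fps F \<Longrightarrow> int_fps G \<Longrightarrow> int_fps (F * G)"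
  unfolding int_fps_def fps_mult_nth by (auto intro!: Ints_sum Ints_mult)

lemma int_fps_power: "int_fps F \<Longrightarrow> int_fps (F ^ m)"
  by (induction m) (auto simp: int_fps_mult, simp add: int_fps_def)

lemma int_fps_cyc_factor: "1 \<le> j \<Longrightarrow> int_fps (cyc_factor k j)"
proof -
  have "int_fps (1 - fps_X ^ j)" "int_fps (geometric_fps j)"
    by (auto simp: int_fps_def geometric_fps_def)
  then show "1 \<le> j \<Longrightarrow> int_fps (cyc_factor k j)"
    by (simp add: cyc_factor_eq int_fps_power)
qed

lemma int_fps_cyc_prod: "int_fps (cyc_prod e n)"
proof (induction n)
  case 0
  then show ?case by (simp add: int_fps_def)
next
  case (Suc n)
  then show ?case
    unfolding cyc_prod_Suc by (intro int_fps_mult int_fps_cyc_factor) auto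
qed

text \<open>The exponents are determined one at a time: comparing the coefficients of \<open>X\<^sup>n\<close> fixes \<open>e n\<close>.\<close>

primrec cyc_exps_upto :: "rat fps \<Rightarrow> nat \<Rightarrow> nat \<Rightarrow> int" where
  "cyc_exps_upto g 0 = (\<lambda>_. 0)"
| "cyc_exps_upto g (Suc n) =
     (cyc_exps_upto g n)(Suc n := \<lfloor>cyc_prod (cyc_exps_upto g n) n $ Suc n - g $ Suc n\<rfloor>)"

lemma cyc_exps_upto_stable: "j \<le> n \<Longrightarrow> cyc_exps_upto g n j = cyc_exps_upto g j j"
proof (induction n)
  case (Suc n)
  then show ?case
    by (cases "j = Suc n") simp_all
qed simp

lemma has_cyc_exps_exists:
  assumes "int_fps g" "g $ 0 = 1"
  shows "\<exists>e. e 0 = 0 \<and> has_cyc_exps g e"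
proof -
  define e where "e j = cyc_exps_upto g j j" for j
  have e_upto: "cyc_prod e n = cyc_prod (cyc_exps_upto g n) n" for n
    by (rule cyc_prod_cong) (metis e_def cyc_exps_upto_stable)
  have "g $ n = cyc_prod e n $ n" for n
  proof (cases n)
    case 0
    then show ?thesis using assms by simp
  next
    case (Suc k)
    define q where "q = cyc_prod (cyc_exps_upto g k) k $ Suc k - g $ Suc k"
    have "q \<in> \<int>"
      unfolding q_def using int_fps_cyc_prod[of "cyc_exps_upto g k" k] assms(1)
      by (simp add: int_fps_def)
    then obtain z where "q = of_int z"
      by (rule Ints_cases)
    then have q: "of_int \<lfloor>q\<rfloor> = q"
      by simp
    have previous: "cyc_prod (cyc_exps_upto g (Suc k)) k = cyc_prod (cyc_exps_upto g k) k"
      by (rule cyc_prod_cong) simp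
    have "cyc_prod e n $ n = cyc_prod (cyc_exps_upto g (Suc k)) (Suc k) $ Suc k"
      unfolding Suc by (simp only: e_upto)
    also have "\<dots> = cyc_prod (cyc_exps_upto g k) k $ Suc k - of_int \<lfloor>q\<rfloor>"
      unfolding cyc_prod_Suc_nth_top previous by (simp add: q_def)
    also have "\<dots> = g $ n"
      unfolding q unfolding q_def Suc by simp
    finally show ?thesis
      by simp
  qed
  moreover have "e 0 = 0"
    by (simp add: e_def)
  ultimately show ?thesis
    unfolding has_cyc_exps_def by blast
qed

lemma has_cyc_exps_unique:
  assumes "has_cyc_exps g e" "has_cyc_exps g e'" "e 0 = 0" "e' 0 = 0"
  shows "e = e'"
proof -
  have "\<forall>j\<le>n. e j = e' j" for n
  proof (induction n)
    case 0
    then show ?case using assms by simp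
  next
    case (Suc n)
    have "cyc_prod e n = cyc_prod e' n"
      by (rule cyc_prod_cong) (use Suc in auto)
    moreover have "g $ Suc n = cyc_prod e n $ Suc n - of_int (e (Suc n))"
      "g $ Suc n = cyc_prod e' n $ Suc n - of_int (e' (Suc n))"
      using assms(1,2) cyc_prod_Suc_nth_top unfolding has_cyc_exps_def by metis+
    ultimately have "e (Suc n) = e' (Suc n)"
      by simp
    then show ?case
      using Suc by (auto simp: le_Suc_eq)
  qed
  then show ?thesis
    by auto
qed

lemma is_cyc_exp_cyc_exp:
  assumes "0 \<in> S"
  shows "is_cyc_exp S (cyc_exp S)"
proof -
  have "int_fps (sg_series S)"
    unfolding sg_series_def by (intro int_fps_mult) (auto simp: int_fps_def)
  moreover have "sg_series S $ 0 = 1"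
    using assms by (simp add: sg_series_def)
  ultimately obtain e where e: "is_cyc_exp S e"
    using has_cyc_exps_exists is_cyc_exp_iff by blast
  moreover have "e' = e" if "is_cyc_exp S e'" for e'
    using that e has_cyc_exps_unique unfolding is_cyc_exp_iff by blast
  ultimately show ?thesis
    unfolding cyc_exp_def by (rule theI)
qed

lemma fps_mult_nth_cong: "(\<And>m. m \<le> n \<Longrightarrow> F $ m = G $ m) \<Longrightarrow> (F * H) $ n = (G * H) $ n"
  unfolding fps_mult_nth by (intro sum.cong) auto

lemma has_cyc_exps_mult:
  assumes g: "has_cyc_exps g e" and j: "1 \<le> j" and H: "low_terms j d H"
    and shift: "\<And>k. cyc_factor k j * H = cyc_factor (k + d) j"
  shows "has_cyc_exps (g * H) (e(j := e j + d))"
  unfolding has_cyc_exps_def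
proof
  fix n
  show "(g * H) $ n = cyc_prod (e(j := e j + d)) n $ n"
  proof (cases "n < j")
    case True
    have "cyc_prod (e(j := e j + d)) n = cyc_prod e n"
      using True by (intro cyc_prod_cong) auto
    then show ?thesis
      using g True fps_mult_nth_below_low_terms[OF H] by (simp add: has_cyc_exps_def)
  next
    case False
    then have "j \<in> {1..n}"
      using j by simp
    let ?rest = "\<Prod>i\<in>{1..n} - {j}. cyc_factor (e i) i"
    have "(\<Prod>i\<in>{1..n} - {j}. cyc_factor ((e(j := e j + d)) i) i) = ?rest"
      by (rule prod.cong) auto
    then have "cyc_prod (e(j := e j + d)) n = cyc_factor (e j + d) j * ?rest"
      using prod.remove[OF finite_atLeastAtMost \<open>j \<in> {1..n}\<close>,
          of "\<lambda>i. cyc_factor ((e(j := e j + d)) i) i"] by simp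
    also have "\<dots> = (cyc_factor (e j) j * ?rest) * H"
      by (simp add: shift[symmetric] mult_ac)
    also have "cyc_factor (e j) j * ?rest = cyc_prod e n"
      using prod.remove[OF finite_atLeastAtMost \<open>j \<in> {1..n}\<close>, of "\<lambda>i. cyc_factor (e i) i"]
      by simp
    finally have "cyc_prod (e(j := e j + d)) n = cyc_prod e n * H" .
    moreover have "(g * H) $ n = (cyc_prod e n * H) $ n"
      by (rule fps_mult_nth_cong) (rule has_cyc_exps_nth[OF g])
    ultimately show ?thesis
      by simp
  qed
qed

lemma has_cyc_exps_mult_one_minus_X_power:
  "has_cyc_exps g e \<Longrightarrow> 1 \<le> j \<Longrightarrow> has_cyc_exps (g * (1 - fps_X ^ j)) (e(j := e j + 1))"
  by (rule has_cyc_exps_mult)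
    (simp_all add: low_terms_one_minus_X_power cyc_factor_times_one_minus_X_power)

lemma has_cyc_exps_mult_geometric_fps:
  "has_cyc_exps g e \<Longrightarrow> 1 \<le> j \<Longrightarrow> has_cyc_exps (g * geometric_fps j) (e(j := e j - 1))"
  using has_cyc_exps_mult[of g e j "-1" "geometric_fps j"]
  by (simp add: low_terms_geometric_fps cyc_factor_times_geometric_fps)

lemma has_cyc_exps_mult_prod:
  "finite B \<Longrightarrow> 0 \<notin> B \<Longrightarrow> has_cyc_exps g e
    \<Longrightarrow> has_cyc_exps (g * (\<Prod>a\<in>B. 1 - fps_X ^ a)) (\<lambda>j. e j + of_bool (j \<in> B))"
proof (induction B rule: finite_induct)
  case empty
  then show ?case by simp
next
  case (insert a B)
  then have "has_cyc_exps ((g * (\<Prod>b\<in>B. 1 - fps_X ^ b)) * (1 - fps_X ^ a))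
               ((\<lambda>j. e j + of_bool (j \<in> B))(a := e a + of_bool (a \<in> B) + 1))"
    by (intro has_cyc_exps_mult_one_minus_X_power) auto
  moreover have "(\<lambda>j. e j + of_bool (j \<in> B))(a := e a + of_bool (a \<in> B) + 1)
                 = (\<lambda>j. e j + of_bool (j \<in> insert a B))"
    using insert.hyps(2) by auto
  ultimately show ?case
    using insert.hyps by (simp add: mult_ac)
qed


section \<open>Exponents of series supported on an additive semigroup\<close>

definition add_closed :: "nat set \<Rightarrow> bool" where
  "add_closed U \<longleftrightarrow> (\<forall>u\<in>U. \<forall>v\<in>U. u + v \<in> U)"

definition supported_in :: "nat set \<Rightarrow> rat fps \<Rightarrow> bool" where
  "supported_in U F \<longleftrightarrow> (\<forall>m. F $ m \<noteq> 0 \<longrightarrow> m = 0 \<or> m \<in> U)"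

lemma add_closed_mult: "add_closed U \<Longrightarrow> j \<in> U \<Longrightarrow> 0 < q \<Longrightarrow> q * j \<in> U"
proof (induction q)
  case (Suc q)
  show ?case
  proof (cases "q = 0")
    case False
    then have "q * j \<in> U"
      using Suc by simp
    then show ?thesis
      using Suc.prems unfolding add_closed_def by (simp add: add.commute)
  qed (use Suc.prems in simp)
qed simp

lemma fps_mult_nth_nonzero:
  assumes "((F :: rat fps) * G) $ m \<noteq> 0"
  obtains i where "i \<le> m" "F $ i \<noteq> 0" "G $ (m - i) \<noteq> 0"
proof -
  have "(\<Sum>i=0..m. F $ i * G $ (m - i)) \<noteq> 0"
    using assms by (simp add: fps_mult_nth)
  then obtain i where "i \<in> {0..m}" "F $ i * G $ (m - i) \<noteq> 0"
    by (meson sum.neutral)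
  then show ?thesis
    using that by simp
qed

lemma supported_in_one: "supported_in U 1"
  by (simp add: supported_in_def)

lemma supported_in_mono: "supported_in U F \<Longrightarrow> U \<subseteq> insert 0 V \<Longrightarrow> supported_in V F"
  by (auto simp: supported_in_def)

lemma supported_in_mult:
  assumes "add_closed U" "supported_in U F" "supported_in U G"
  shows "supported_in U (F * G)"
  unfolding supported_in_def
proof (intro allI impI)
  fix m assume "(F * G) $ m \<noteq> 0"
  then obtain i where i: "i \<le> m" "F $ i \<noteq> 0" "G $ (m - i) \<noteq> 0"
    by (rule fps_mult_nth_nonzero)
  then have "i = 0 \<or> i \<in> U" "m - i = 0 \<or> m - i \<in> U"
    using assms(2,3) by (auto simp: supported_in_def)
  moreover have "m = i + (m - i)"
    using i(1) by simp
  ultimately show "m = 0 \<or> m \<in> U"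
    using assms(1) unfolding add_closed_def by (metis add.right_neutral add_0)
qed

lemma supported_in_power: "add_closed U \<Longrightarrow> supported_in U F \<Longrightarrow> supported_in U (F ^ n)"
  by (induction n) (simp_all add: supported_in_one supported_in_mult)

lemma supported_in_cyc_factor: "1 \<le> j \<Longrightarrow> supported_in {m. j dvd m} (cyc_factor k j)"
proof -
  have "add_closed {m. j dvd m}"
    by (simp add: add_closed_def)
  moreover have "supported_in {m. j dvd m} (1 - fps_X ^ j)" "supported_in {m. j dvd m} (geometric_fps j)"
    by (auto simp: supported_in_def geometric_fps_def)
  ultimately show "1 \<le> j \<Longrightarrow> supported_in {m. j dvd m} (cyc_factor k j)"
    by (simp add: cyc_factor_eq supported_in_power)
qed

lemma supported_in_cyc_factor_of_mem:
  assumes "add_closed U" "j \<in> U" "1 \<le> j"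
  shows "supported_in U (cyc_factor k j)"
proof (rule supported_in_mono[OF supported_in_cyc_factor[OF assms(3)]])
  show "{m. j dvd m} \<subseteq> insert 0 U"
  proof
    fix m assume "m \<in> {m. j dvd m}"
    then obtain q where "m = q * j"
      by (metis mem_Collect_eq dvdE mult.commute)
    then show "m \<in> insert 0 U"
      using add_closed_mult[OF assms(1,2), of q] by (cases "q = 0") auto
  qed
qed

lemma supported_in_cyc_prod:
  assumes "add_closed U" "\<And>j. 1 \<le> j \<Longrightarrow> j \<le> n \<Longrightarrow> j \<notin> U \<Longrightarrow> e j = 0"
  shows "supported_in U (cyc_prod e n)"
  using assms(2)
proof (induction n)
  case 0
  then show ?case by (simp add: supported_in_one)
next
  case (Suc n)
  have "supported_in U (cyc_factor (e (Suc n)) (Suc n))"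
    using Suc.prems supported_in_cyc_factor_of_mem[OF assms(1)] supported_in_one
    by (cases "Suc n \<in> U") auto
  then show ?case
    unfolding cyc_prod_Suc using Suc by (intro supported_in_mult assms(1)) auto
qed

lemma has_cyc_exps_eq_0_outside:
  assumes g: "has_cyc_exps g e" and U: "add_closed U"
    and vanish: "\<And>m. 1 \<le> m \<Longrightarrow> m \<notin> U \<Longrightarrow> g $ m = 0"
  shows "1 \<le> n \<Longrightarrow> n \<notin> U \<Longrightarrow> e n = 0"
proof (induction n rule: less_induct)
  case (less n)
  then obtain k where n: "n = Suc k"
    by (cases n) auto
  have "supported_in U (cyc_prod e k)"
    using less n by (intro supported_in_cyc_prod U) auto
  then have "cyc_prod e k $ n = 0"
    using less.prems by (auto simp: supported_in_def)
  moreover have "g $ n = cyc_prod e k $ n - of_int (e n)"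
    using g n cyc_prod_Suc_nth_top by (simp add: has_cyc_exps_def)
  ultimately show ?case
    using vanish less.prems by simp
qed

lemma fps_mult_nth_indecomposable:
  assumes "supported_in U F" "supported_in U G" "F $ n = 0" "G $ n = 0"
    and "\<forall>u\<in>U. \<forall>v\<in>U. u + v \<noteq> n"
  shows "(F * G) $ n = 0"
proof (rule ccontr)
  assume "(F * G) $ n \<noteq> 0"
  then obtain i where i: "i \<le> n" "F $ i \<noteq> 0" "G $ (n - i) \<noteq> 0"
    by (rule fps_mult_nth_nonzero)
  then have "i \<noteq> 0" "i \<noteq> n"
    using assms(3,4) by (metis diff_zero)+
  then have "i \<in> U" "n - i \<in> U"
    using i assms(1,2) by (auto simp: supported_in_def)
  then show False
    using assms(5) i(1) by force
qed

lemma cyc_factor_nth_indecomposable: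
  assumes "add_closed U" "j \<in> U" "1 \<le> j" "j < n" "\<forall>u\<in>U. \<forall>v\<in>U. u + v \<noteq> n"
  shows "cyc_factor k j $ n = 0"
proof (rule ccontr)
  assume "cyc_factor k j $ n \<noteq> 0"
  then have "j dvd n"
    using supported_in_cyc_factor[OF assms(3), of k] assms(4) by (auto simp: supported_in_def)
  then obtain q where q: "n = j * q" ..
  with assms(3,4) have "1 < q"
    by (cases q) auto
  then have "(q - 1) * j \<in> U"
    by (intro add_closed_mult assms(1,2)) simp
  moreover have "j + (q - 1) * j = n"
    using q \<open>1 < q\<close> by (cases q) auto
  ultimately show False
    using assms(2,5) by blast
qed

lemma has_cyc_exps_at_indecomposable:
  assumes g: "has_cyc_exps g e" and U: "add_closed U"
    and vanish: "\<And>m. 1 \<le> m \<Longrightarrow> m \<notin> U \<Longrightarrow> g $ m = 0"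
    and "n \<in> U" and indec: "\<forall>u\<in>U. \<forall>v\<in>U. u + v \<noteq> n"
  shows "of_int (e n) = - g $ n"
proof -
  have outside: "e j = 0" if "1 \<le> j" "j \<notin> U" for j
    using has_cyc_exps_eq_0_outside[OF g U vanish that] .
  obtain k where n: "n = Suc k"
    using \<open>n \<in> U\<close> indec by (cases n) auto
  have "cyc_prod e k' $ n = 0" if "k' \<le> k" for k'
    using that
  proof (induction k')
    case 0
    then show ?case using n by simp
  next
    case (Suc k')
    have "cyc_factor (e (Suc k')) (Suc k') $ n = 0"
    proof (cases "Suc k' \<in> U")
      case True
      then show ?thesis
        using Suc.prems n by (intro cyc_factor_nth_indecomposable[OF U True _ _ indec]) auto
    qed (use n outside in simp)
    moreover have "supported_in U (cyc_factor (e (Suc k')) (Suc k'))"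
      using outside supported_in_cyc_factor_of_mem[OF U] supported_in_one
      by (cases "Suc k' \<in> U") auto
    ultimately show ?case
      unfolding cyc_prod_Suc using Suc outside
      by (intro fps_mult_nth_indecomposable[OF _ _ _ _ indec] supported_in_cyc_prod U) auto
  qed
  moreover have "g $ n = cyc_prod e k $ n - of_int (e n)"
    using g n cyc_prod_Suc_nth_top by (simp add: has_cyc_exps_def)
  ultimately show ?thesis
    by simp
qed


section \<open>Minimal elements with several factorizations\<close>

context num_semigroup
begin

lemma le_S_refl: "le_S S x x"
  by (simp add: le_S_def numerical_semigroup_zero)

lemma le_S_trans: "le_S S x y \<Longrightarrow> le_S S y z \<Longrightarrow> le_S S x z"
  using numerical_semigroup_add[of "z - y" "y - x"] by (auto simp: le_S_def)

lemma ex_minimal_le: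
  "x \<in> X \<Longrightarrow> \<exists>m\<in>minimal_elements S X. le_S S m x"
proof (induction x rule: less_induct)
  case (less x)
  show ?case
  proof (cases "x \<in> minimal_elements S X")
    case True
    then show ?thesis using le_S_refl by blast
  next
    case False
    then obtain y where y: "y \<in> X" "le_S S y x" "y \<noteq> x"
      using less.prems by (auto simp: minimal_elements_def)
    then have "y < x"
      by (auto simp: le_S_def)
    then show ?thesis
      using less.IH y le_S_trans by blast
  qed
qed

lemma minimal_elements_eq:
  assumes "X \<subseteq> Y" "minimal_elements S Y \<subseteq> X"
  shows "minimal_elements S X = minimal_elements S Y"
proof
  show "minimal_elements S X \<subseteq> minimal_elements S Y"
  proof
    fix x assume x: "x \<in> minimal_elements S X"
    then obtain m where "m \<in> minimal_elements S Y" "le_S S m x"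
      using ex_minimal_le[of x Y] assms(1)
      by (auto simp: minimal_elements_def)
    then show "x \<in> minimal_elements S Y"
      using x assms(2) by (auto simp: minimal_elements_def)
  qed
  show "minimal_elements S Y \<subseteq> minimal_elements S X"
    using assms by (auto simp: minimal_elements_def)
qed

lemma factorizations_eq: "factorizations S s = factorizations_over (atoms S) s"
  by (simp add: factorizations_eq_over_min_gens min_gens_eq_atoms)

lemma fdot_eq_0_iff: "fdot S x y = 0 \<longleftrightarrow> (\<forall>a\<in>atoms S. x a = 0 \<or> y a = 0)"
  using finite_atoms by (simp add: fdot_def min_gens_eq_atoms)

lemma finite_factorizations: "finite (factorizations S s)"
  unfolding factorizations_eq using finite_atoms zero_notin_atoms
  by (rule finite_factorizations_over)

lemma numerical_semigroup_mult: "a \<in> S \<Longrightarrow> k * a \<in> S"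
  by (induction k) (simp_all add: numerical_semigroup_zero numerical_semigroup_add)

lemma numerical_semigroup_sum: "finite B \<Longrightarrow> B \<subseteq> S \<Longrightarrow> (\<Sum>b\<in>B. z b * b) \<in> S"
  by (induction B rule: finite_induct)
    (simp_all add: numerical_semigroup_zero numerical_semigroup_add numerical_semigroup_mult)

lemma factorization_mem: "z \<in> factorizations S s \<Longrightarrow> s \<in> S"
  using numerical_semigroup_sum[OF finite_atoms atoms_subset, of z]
  by (auto simp: factorizations_eq factorizations_over_def)

lemma factorizations_nonempty: "s \<in> S \<Longrightarrow> factorizations S s \<noteq> {}"
proof -
  assume "s \<in> S"
  then have "s \<in> monoid_closure (atoms S)"
    by (simp add: monoid_closure_atoms)
  then show ?thesis
    unfolding factorizations_eq
  proof (induction rule: monoid_closure.induct)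
    case mc_zero
    then show ?case
      using factorizations_over_zero[OF finite_atoms zero_notin_atoms] by simp
  next
    case (mc_gen a)
    then show ?case
      using factorization_single[OF finite_atoms] by blast
  next
    case (mc_add x y)
    then show ?case
      using factorization_add by blast
  qed
qed

lemma factorizations_atom:
  assumes a: "a \<in> atoms S"
  shows "factorizations S a = {\<lambda>b. of_bool (b = a)}"
proof -
  have "z = (\<lambda>b. of_bool (b = a))" if z: "z \<in> factorizations_over (atoms S) a" for z
  proof -
    have "a \<noteq> 0"
      using a zero_notin_atoms by metis
    moreover have "(\<Sum>c\<in>atoms S. z c * c) = a"
      using z by (simp add: factorizations_over_def)
    ultimately have "(\<Sum>c\<in>atoms S. z c * c) \<noteq> 0"
      by simp
    then obtain b where "b \<in> atoms S" "z b * b \<noteq> 0"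
      by (rule sum.not_neutral_contains_not_neutral)
    then have b: "b \<in> atoms S" "0 < z b"
      by simp_all
    note reduced = factorization_remove[OF finite_atoms z b]
    have "a - b \<in> S"
      using reduced(1) factorization_mem by (auto simp: factorizations_eq)
    moreover have "a = b + (a - b)"
      using reduced(2) by simp
    ultimately have "b = 0 \<or> a - b = 0"
      by (rule atomD[OF a subsetD[OF atoms_subset b(1)]])
    then have "b = a"
      using reduced(2) b(1) zero_notin_atoms by auto
    then have "z(a := z a - 1) = (\<lambda>_. 0)"
      using reduced(1) factorizations_over_zero[OF finite_atoms zero_notin_atoms] by simp
    show ?thesis
    proof
      fix c
      show "z c = of_bool (c = a)"
        using fun_cong[OF \<open>z(a := z a - 1) = (\<lambda>_. 0)\<close>, of c] b(2) \<open>b = a\<close>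
        by (cases "c = a") simp_all
    qed
  qed
  then have "factorizations_over (atoms S) a \<subseteq> {\<lambda>b. of_bool (b = a)}"
    by blast
  then show ?thesis
    unfolding factorizations_eq using factorization_single[OF finite_atoms a] by blast
qed

definition multifactored :: "nat set" where
  "multifactored = {s. \<exists>x\<in>factorizations S s. \<exists>y\<in>factorizations S s. x \<noteq> y}"

lemma multifactored_subset: "multifactored \<subseteq> S"
  by (auto simp: multifactored_def dest: factorization_mem)

lemma atom_notin_multifactored: "a \<in> atoms S \<Longrightarrow> a \<notin> multifactored"
  by (simp add: multifactored_def factorizations_atom)

lemma zero_notin_multifactored: "0 \<notin> multifactored"
  using factorizations_over_zero[OF finite_atoms zero_notin_atoms]
  by (simp add: multifactored_def factorizations_eq)

lemma one_notin_multifactored: "1 \<notin> multifactored"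
proof
  assume "1 \<in> multifactored"
  then have "1 \<in> atoms S"
    using multifactored_subset by (auto simp: atoms_def)
  then show False
    using \<open>1 \<in> multifactored\<close> atom_notin_multifactored by blast
qed

lemma multifactored_add: "s \<in> multifactored \<Longrightarrow> t \<in> S \<Longrightarrow> s + t \<in> multifactored"
proof -
  assume "s \<in> multifactored" "t \<in> S"
  then obtain x y where xy: "x \<in> factorizations S s" "y \<in> factorizations S s" "x \<noteq> y"
    by (auto simp: multifactored_def)
  obtain w where w: "w \<in> factorizations S t"
    using factorizations_nonempty[OF \<open>t \<in> S\<close>] by blast
  have "(\<lambda>a. x a + w a) \<noteq> (\<lambda>a. y a + w a)"
    using xy(3) by (auto simp: fun_eq_iff)
  then show "s + t \<in> multifactored"
    using factorization_add[of x _ s w t] factorization_add[of y _ s w t] xy w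
    by (auto simp: multifactored_def factorizations_eq)
qed

lemma add_closed_multifactored: "add_closed multifactored"
  unfolding add_closed_def by (meson multifactored_add multifactored_subset subsetD)

lemma num_fact_ge_2: "s \<in> multifactored \<Longrightarrow> 2 \<le> num_fact S s"
proof -
  assume "s \<in> multifactored"
  then obtain x y where "{x, y} \<subseteq> factorizations S s" "x \<noteq> y"
    by (auto simp: multifactored_def)
  then have "card {x, y} \<le> num_fact S s"
    unfolding num_fact_def by (intro card_mono finite_factorizations)
  then show ?thesis
    using \<open>x \<noteq> y\<close> by simp
qed

lemma num_fact_eq_1: "s \<in> S \<Longrightarrow> s \<notin> multifactored \<Longrightarrow> num_fact S s = 1"
proof -
  assume "s \<in> S" "s \<notin> multifactored"
  then obtain z where "z \<in> factorizations S s"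
    using factorizations_nonempty by blast
  moreover have "y = z" if "y \<in> factorizations S s" for y
    using that \<open>z \<in> factorizations S s\<close> \<open>s \<notin> multifactored\<close> by (auto simp: multifactored_def)
  ultimately have "factorizations S s = {z}"
    by blast
  then show ?thesis
    by (simp add: num_fact_def)
qed

text \<open>Two distinct factorizations of a minimal element sharing an atom \<open>a\<close> would give two
  distinct factorizations of the smaller element \<open>m - a\<close>.\<close>

lemma fdot_eq_0_minimal:
  assumes m: "m \<in> minimal_elements S multifactored"
    and x: "x \<in> factorizations S m" and y: "y \<in> factorizations S m" and "x \<noteq> y"
  shows "fdot S x y = 0"
proof (rule ccontr)
  assume "fdot S x y \<noteq> 0"
  then obtain a where a: "a \<in> atoms S" "0 < x a" "0 < y a"
    by (auto simp: fdot_eq_0_iff)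
  note x' = factorization_remove[OF finite_atoms x[unfolded factorizations_eq] a(1,2)]
  note y' = factorization_remove[OF finite_atoms y[unfolded factorizations_eq] a(1,3)]
  have "x(a := x a - 1) \<noteq> y(a := y a - 1)"
  proof
    assume eq: "x(a := x a - 1) = y(a := y a - 1)"
    have "x b = y b" for b
      using fun_cong[OF eq, of b] a by (cases "b = a") auto
    with \<open>x \<noteq> y\<close> show False
      by blast
  qed
  then have "m - a \<in> multifactored"
    using x'(1) y'(1) by (auto simp: multifactored_def factorizations_eq)
  moreover have "le_S S (m - a) m"
    using x'(2) a(1) atoms_subset by (auto simp: le_S_def)
  ultimately have "m - a = m"
    using m by (auto simp: minimal_elements_def)
  then show False
    using x'(2) a(1) zero_notin_atoms by (cases "a = 0") auto
qed

lemma Betti_subset_multifactored: "Betti S \<subseteq> multifactored"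
proof
  fix s assume "s \<in> Betti S"
  then obtain x y where xy: "x \<in> factorizations S s" "y \<in> factorizations S s"
    "(x, y) \<notin> (nabla_edges S s)\<^sup>*"
    unfolding Betti_def nabla_connected_def by blast
  then have "x \<noteq> y"
    by auto
  with xy(1,2) show "s \<in> multifactored"
    unfolding multifactored_def by blast
qed

lemma minimal_multifactored_subset_Betti: "minimal_elements S multifactored \<subseteq> Betti S"
proof
  fix m assume m: "m \<in> minimal_elements S multifactored"
  then obtain x y where xy: "x \<in> factorizations S m" "y \<in> factorizations S m" "x \<noteq> y"
    by (auto simp: minimal_elements_def multifactored_def)
  have "nabla_edges S m = {}"
  proof (rule equals0I)
    fix p assume "p \<in> nabla_edges S m"
    then show False
      using fdot_eq_0_minimal[OF m] by (cases p) (auto simp: nabla_edges_def)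
  qed
  then have "(x, y) \<notin> (nabla_edges S m)\<^sup>*"
    using xy(3) by simp
  then have "\<not> nabla_connected S m"
    using xy(1,2) unfolding nabla_connected_def by blast
  then show "m \<in> Betti S"
    using factorization_mem[OF xy(1)] by (simp add: Betti_def)
qed

lemma minimal_Betti: "minimal_elements S (Betti S) = minimal_elements S multifactored"
  by (rule minimal_elements_eq[OF Betti_subset_multifactored minimal_multifactored_subset_Betti])

lemma num_isolated_minimal:
  assumes "m \<in> minimal_elements S multifactored"
  shows "num_isolated S m = num_fact S m"
proof -
  have "isolated_facts S m = factorizations S m"
    using fdot_eq_0_minimal[OF assms] unfolding isolated_facts_def by blast
  then show ?thesis
    by (simp add: num_isolated_def num_fact_def)
qed

end


section \<open>The numerator of the Hilbert series\<close>

context num_semigroup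
begin

definition hilbert_fps :: "rat fps" where
  "hilbert_fps = Abs_fps (\<lambda>n. if n \<in> S then 1 else 0)"

definition hilbert_numerator :: "rat fps" where
  "hilbert_numerator = hilbert_fps * (\<Prod>a\<in>atoms S. 1 - fps_X ^ a)"

lemma num_fact_eq_0: "n \<notin> S \<Longrightarrow> num_fact S n = 0"
proof -
  assume "n \<notin> S"
  then have "factorizations S n = {}"
    using factorization_mem by blast
  then show ?thesis
    by (simp add: num_fact_def)
qed

lemma hilbert_fps_eq: "hilbert_fps = hilbert_numerator * denumerant_fps (atoms S)"
proof -
  have "hilbert_numerator * denumerant_fps (atoms S)
        = hilbert_fps * (denumerant_fps (atoms S) * (\<Prod>a\<in>atoms S. 1 - fps_X ^ a))"
    by (simp add: hilbert_numerator_def mult_ac)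
  then show ?thesis
    by (simp add: denumerant_fps_times_prod[OF finite_atoms zero_notin_atoms])
qed

lemma hilbert_numerator_nth_0: "hilbert_numerator $ 0 = 1"
proof -
  have "(\<Prod>a\<in>B. 1 - fps_X ^ a :: rat fps) $ 0 = 1" if "finite B" "0 \<notin> B" for B
    using that by (induction B rule: finite_induct) auto
  then show ?thesis
    using finite_atoms zero_notin_atoms numerical_semigroup_zero
    by (simp add: hilbert_numerator_def hilbert_fps_def)
qed

text \<open>Comparing coefficients in \<open>hilbert_fps = hilbert_numerator * denumerant_fps\<close>.\<close>

lemma hilbert_numerator_nth:
  assumes "1 \<le> n" "\<And>t. 1 \<le> t \<Longrightarrow> t < n \<Longrightarrow> hilbert_numerator $ t \<noteq> 0 \<Longrightarrow> n - t \<notin> S"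
  shows "hilbert_numerator $ n = of_bool (n \<in> S) - of_nat (num_fact S n)"
proof -
  let ?N = "hilbert_numerator" and ?d = "\<lambda>t. of_nat (num_fact S t) :: rat"
  have "{0..n} = insert 0 (insert n {1..<n})"
    using assms(1) by auto
  then have "hilbert_fps $ n = ?N $ 0 * ?d n + ?N $ n * ?d 0 + (\<Sum>t\<in>{1..<n}. ?N $ t * ?d (n - t))"
    unfolding hilbert_fps_eq fps_mult_nth using assms(1)
    by (simp add: denumerant_fps_def num_fact_def factorizations_eq)
  also have "(\<Sum>t\<in>{1..<n}. ?N $ t * ?d (n - t)) = 0"
  proof (rule sum.neutral, rule ballI)
    fix t assume "t \<in> {1..<n}"
    then show "?N $ t * ?d (n - t) = 0"
      using assms(2)[of t] num_fact_eq_0[of "n - t"] by (cases "?N $ t = 0") auto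
  qed
  finally have "hilbert_fps $ n = ?d n + ?N $ n"
    using num_fact_eq_1[OF numerical_semigroup_zero zero_notin_multifactored]
      hilbert_numerator_nth_0 by simp
  then show ?thesis
    by (simp add: hilbert_fps_def algebra_simps split: if_splits)
qed

lemma hilbert_numerator_nth_eq_0: "1 \<le> n \<Longrightarrow> n \<notin> multifactored \<Longrightarrow> hilbert_numerator $ n = 0"
proof (induction n rule: less_induct)
  case (less n)
  have "n - t \<notin> S" if "1 \<le> t" "t < n" "hilbert_numerator $ t \<noteq> 0" for t
    using less that multifactored_add[of t "n - t"] by auto
  then show ?case
    using hilbert_numerator_nth[OF less.prems(1)] num_fact_eq_1[OF _ less.prems(2)] num_fact_eq_0
    by (cases "n \<in> S") auto
qed

lemma hilbert_numerator_nth_minimal: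
  assumes m: "m \<in> minimal_elements S multifactored"
  shows "hilbert_numerator $ m = 1 - of_nat (num_fact S m)"
proof -
  have "m \<in> multifactored"
    using m by (simp add: minimal_elements_def)
  then have "m \<noteq> 0" "m \<in> S"
    using zero_notin_multifactored multifactored_subset by (metis, blast)
  then have "1 \<le> m" "m \<in> S"
    by simp_all
  moreover have "m - t \<notin> S" if "1 \<le> t" "t < m" "hilbert_numerator $ t \<noteq> 0" for t
  proof
    assume "m - t \<in> S"
    then have "le_S S t m"
      using that by (simp add: le_S_def)
    moreover have "t \<in> multifactored"
      using that hilbert_numerator_nth_eq_0 by blast
    ultimately show False
      using m that(2) by (auto simp: minimal_elements_def)
  qed
  ultimately show ?thesis
    using hilbert_numerator_nth by simp
qed

text \<open>\<open>hilbert_numerator = sg_series S / (1 - X) * \<Prod>\<^sub>a (1 - X\<^sup>a)\<close>, which shifts the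
  exponents by \<open>-1\<close> at \<open>1\<close> and by \<open>+1\<close> at each atom.\<close>

definition numerator_exp :: "nat \<Rightarrow> int" where
  "numerator_exp j = cyc_exp S j + of_bool (j \<in> atoms S) - of_bool (j = 1)"

lemma has_cyc_exps_hilbert_numerator: "has_cyc_exps hilbert_numerator numerator_exp"
proof -
  let ?e = "cyc_exp S"
  have "sg_series S * geometric_fps 1 = hilbert_fps * (geometric_fps 1 * (1 - fps_X ^ 1))"
    unfolding sg_series_def hilbert_fps_def by (simp only: power_one_right mult_ac)
  also have "\<dots> = hilbert_fps"
    by (simp only: geometric_fps_times[OF order_refl] mult_1_right)
  moreover have "has_cyc_exps (sg_series S) ?e"
    using is_cyc_exp_cyc_exp[OF numerical_semigroup_zero] by (simp add: is_cyc_exp_iff)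
  ultimately have "has_cyc_exps hilbert_fps (?e(1 := ?e 1 - 1))"
    by (metis has_cyc_exps_mult_geometric_fps order_refl)
  then have "has_cyc_exps hilbert_numerator (\<lambda>j. (?e(1 := ?e 1 - 1)) j + of_bool (j \<in> atoms S))"
    unfolding hilbert_numerator_def by (rule has_cyc_exps_mult_prod[OF finite_atoms zero_notin_atoms])
  moreover have "(\<lambda>j. (?e(1 := ?e 1 - 1)) j + of_bool (j \<in> atoms S)) = numerator_exp"
    by (auto simp: numerator_exp_def)
  ultimately show ?thesis
    by simp
qed

end


section \<open>Minimal exceptional exponents\<close>

context num_semigroup
begin

lemma numerator_exp_eq_0: "1 \<le> n \<Longrightarrow> n \<notin> multifactored \<Longrightarrow> numerator_exp n = 0"
  by (rule has_cyc_exps_eq_0_outside[OF has_cyc_exps_hilbert_numerator add_closed_multifactored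
        hilbert_numerator_nth_eq_0])

lemma numerator_exp_minimal:
  assumes m: "m \<in> minimal_elements S multifactored"
  shows "numerator_exp m = int (num_fact S m) - 1"
proof -
  have "m \<in> multifactored"
    using m by (simp add: minimal_elements_def)
  moreover have "u + v \<noteq> m" if "u \<in> multifactored" "v \<in> multifactored" for u v
  proof
    assume "u + v = m"
    then have "le_S S u m"
      using that(2) multifactored_subset by (auto simp: le_S_def)
    then have "v = 0"
      using m that(1) \<open>u + v = m\<close> by (auto simp: minimal_elements_def)
    then show False
      using that(2) zero_notin_multifactored by simp
  qed
  ultimately have "of_int (numerator_exp m) = - hilbert_numerator $ m"
    by (intro has_cyc_exps_at_indecomposable[OF has_cyc_exps_hilbert_numerator add_closed_multifactored
          hilbert_numerator_nth_eq_0]) auto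
  then have "(of_int (numerator_exp m) :: rat) = of_int (int (num_fact S m) - 1)"
    using hilbert_numerator_nth_minimal[OF m] by simp
  then show ?thesis
    by (simp only: of_int_eq_iff)
qed

lemma numerator_exp_eq_cyc_exp: "2 \<le> d \<Longrightarrow> d \<notin> atoms S \<Longrightarrow> numerator_exp d = cyc_exp S d"
  by (simp add: numerator_exp_def)

lemma cyc_E_eq: "cyc_E S = {d. 2 \<le> d \<and> cyc_exp S d \<noteq> 0 \<and> d \<notin> atoms S}"
  by (simp add: cyc_E_def min_gens_eq_atoms)

lemma cyc_E_subset_multifactored: "cyc_E S \<subseteq> multifactored"
proof
  fix d assume "d \<in> cyc_E S"
  then have "2 \<le> d" "numerator_exp d \<noteq> 0"
    using numerator_exp_eq_cyc_exp by (auto simp: cyc_E_eq)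
  then show "d \<in> multifactored"
    using numerator_exp_eq_0[of d] by auto
qed

lemma cyc_exp_minimal:
  assumes m: "m \<in> minimal_elements S multifactored"
  shows "cyc_exp S m = int (num_fact S m) - 1" and "m \<in> cyc_E S"
proof -
  have "m \<in> multifactored"
    using m by (simp add: minimal_elements_def)
  then have "m \<noteq> 0" "m \<noteq> 1" "m \<notin> atoms S"
    using zero_notin_multifactored one_notin_multifactored atom_notin_multifactored by metis+
  then have "2 \<le> m" "m \<notin> atoms S"
    by simp_all
  then show "cyc_exp S m = int (num_fact S m) - 1"
    using numerator_exp_minimal[OF m] numerator_exp_eq_cyc_exp by simp
  then show "m \<in> cyc_E S"
    using num_fact_ge_2[OF \<open>m \<in> multifactored\<close>] \<open>2 \<le> m\<close> \<open>m \<notin> atoms S\<close>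
    by (simp add: cyc_E_eq)
qed

lemma minimal_cyc_E: "minimal_elements S (cyc_E S) = minimal_elements S multifactored"
  using cyc_E_subset_multifactored cyc_exp_minimal(2) by (intro minimal_elements_eq) auto

end

theorem theorem5p3:
  fixes S :: "nat set"
  assumes "numerical_semigroup S"
  shows "minimal_elements S (Betti S) = minimal_elements S (cyc_E S)
         \<and> (\<forall>\<alpha> \<in> minimal_elements S (cyc_E S).
              cyc_exp S \<alpha> = int (num_fact S \<alpha>) - 1
            \<and> cyc_exp S \<alpha> = int (num_isolated S \<alpha>) - 1)"
proof -
  interpret num_semigroup S
    using assms by (rule num_semigroup.intro)
  show ?thesis
    using minimal_Betti minimal_cyc_E cyc_exp_minimal(1) num_isolated_minimal by simp
qed

end
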